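(* Consider the closed-loop data-generating system $$y_t = G(q)S(q) r_t + H(q)S(q) e_t,\qquad u_t = S(q) r_t - K(q)H(q)S(q) e_t,$$ where $q^{-1}$ is the delay operator, $e_t$ is Gaussian white noise with variance $\lambda_e$, $r_t$ is a known external reference signal uncorrelated with $e_t$, $K(q)$ is a stabilizing regulator, $S(q)=[1+K(q)G(q)]^{-1}$, and $$G(q)=\frac{L(q)}{\Gamma(q)F(q)},\qquad H(q)=\frac{C(q)}{\Gamma(q)D(q)},$$ with $L(q)=l_1q^{-1}+\dots+l_{m_l}q^{-m_l}$, $\Gamma(q)=1+\gamma_1q^{-1}+\dots+\gamma_{m_\gamma}q^{-m_\gamma}$, $F(q)=1+f_1q^{-1}+\dots+f_{m_f}q^{-m_f}$, $C(q)=1+c_1q^{-1}+\dots+c_{m_c}q^{-m_c}$, $D(q)=1+d_1q^{-1}+\dots+d_{m_d}q^{-m_d}$ ($m_l,m_\gamma,m_f,m_c,m_d$ finite positive integers). Assume $C(q)$ and $D(q)$ are stable polynomials, $F(q)$ has no roots on the unit circle, $F(q)$ and $D(q)$ are co-prime, and $H(q)$ is stable and inversely stable. Let $J^\star$ be the minimum value, and $\bar A(q)$ the corresponding minimizing $A(q)$, of the cost $$J=\mathbb{E}\left[A(q)y_t-B(q)u_t\right]^2$$ over infinite-order ARX polynomials $A(q)=1+\sum_{k=1}^\infty a_kq^{-k}$ and $B(q)=\sum_{k=1}^\infty b_kq^{-k}$. Let $\bar A_a(q)$ denote the monic polynomial in $q^{-1}$ whose roots are exactly the roots of $\bar A(q)$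 of magnitude larger than one, say $\bar A_a(q)=\prod_{k}(1-p_kq^{-1})$, and let $\bar A_a^*(q)=\prod_k(1-p_k^{-1}q^{-1})$. Then $$H(q)=\frac{1}{\bar A(q)}\frac{\bar A_a(q)}{\bar A_a^*(q)}\qquad\text{and}\qquad \lambda_e=J^\star\left|\frac{\bar A_a^*(e^{i\omega})}{\bar A_a(e^{i\omega})}\right|^2.$$
   Context: A polynomial in $q^{-1}$ is called stable if all its roots (values of $q$ at which it vanishes) lie strictly inside the unit circle; a transfer function is stable (resp. inversely stable) if it (resp. its inverse) has all poles strictly inside the unit circle. Roots of magnitude larger than one are called anti-stable. *)

theory Defs
  imports "HOL-Complex_Analysis.Complex_Analysis" "HOL-Computational_Algebra.Polynomial_Factorial" "HOL-Computational_Algebra.Field_as_Ring"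
begin

text \<open>Polynomials in the delay operator q^{-1}: a real polynomial p represents
  p(q) = coeff p 0 + coeff p 1 * q^{-1} + ... ; evaluation at a complex q.\<close>
definition qev :: "real poly \<Rightarrow> complex \<Rightarrow> complex" where
  "qev p q = poly (map_poly complex_of_real p) (inverse q)"

definition stable_qpoly :: "real poly \<Rightarrow> bool" where
  "stable_qpoly p \<longleftrightarrow> (\<forall>q. q \<noteq> 0 \<longrightarrow> qev p q = 0 \<longrightarrow> cmod q < 1)"

definition tf_stable :: "real poly \<Rightarrow> real poly \<Rightarrow> bool" where
  "tf_stable n d \<longleftrightarrow> (\<forall>q. 1 \<le> cmod q \<longrightarrow> qev (d div gcd n d) q \<noteq> 0)"

text \<open>The causal regulator K = nK/dK internally stabilizes G = L/(Gamma F):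
  all closed-loop poles (roots of the characteristic polynomial) strictly inside the unit circle.\<close>
definition stabilizing :: "real poly \<Rightarrow> real poly \<Rightarrow> real poly \<Rightarrow> real poly \<Rightarrow> real poly \<Rightarrow> bool" where
  "stabilizing L Gam F nK dK \<longleftrightarrow> coeff dK 0 \<noteq> 0 \<and>
     (\<forall>q. 1 \<le> cmod q \<longrightarrow> qev (Gam * F * dK + L * nK) q \<noteq> 0)"

definition Aev :: "(nat \<Rightarrow> real) \<Rightarrow> complex \<Rightarrow> complex" where
  "Aev a q = (\<Sum>k. complex_of_real (a k) * (inverse q) ^ k)"

definition arx_adm :: "(nat \<Rightarrow> real) \<Rightarrow> (nat \<Rightarrow> real) \<Rightarrow> bool" where
  "arx_adm a b \<longleftrightarrow> a 0 = 1 \<and> b 0 = 0 \<and> summable (\<lambda>k. \<bar>a k\<bar>) \<and> summable (\<lambda>k. \<bar>b k\<bar>)"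

definition tfG :: "real poly \<Rightarrow> real poly \<Rightarrow> real poly \<Rightarrow> complex \<Rightarrow> complex" where
  "tfG L Gam F q = qev L q / (qev Gam q * qev F q)"

definition tfH :: "real poly \<Rightarrow> real poly \<Rightarrow> real poly \<Rightarrow> complex \<Rightarrow> complex" where
  "tfH C Gam D q = qev C q / (qev Gam q * qev D q)"

definition tfK :: "real poly \<Rightarrow> real poly \<Rightarrow> complex \<Rightarrow> complex" where
  "tfK nK dK q = qev nK q / qev dK q"

text \<open>The cost J = E[A(q) y_t - B(q) u_t]^2 for the closed-loop data
  y = G S r + H S e, u = S r - K H S e, with r (spectrum Phir) and e
  (white, variance lam) uncorrelated, written via its spectrum (Parseval).\<close>
definition arx_cost ::
  "real poly \<Rightarrow> real poly \<Rightarrow> real poly \<Rightarrow> real poly \<Rightarrow> real poly \<Rightarrow> real poly \<Rightarrow> real poly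
   \<Rightarrow> (real \<Rightarrow> real) \<Rightarrow> real \<Rightarrow> (nat \<Rightarrow> real) \<Rightarrow> (nat \<Rightarrow> real) \<Rightarrow> real" where
  "arx_cost L Gam F C D nK dK Phir lam a b =
     (1 / (2 * pi)) * integral {-pi..pi} (\<lambda>\<omega>.
        let z = cis \<omega>; G = tfG L Gam F z; H = tfH C Gam D z; K = tfK nK dK z;
            S = 1 / (1 + K * G); A = Aev a z; B = Aev b z
        in (cmod (A * G * S - B * S))\<^sup>2 * Phir \<omega> + lam * (cmod ((A + B * K) * H * S))\<^sup>2)"

end

(* Work in the variable w = q^-1, in which stable polynomials have no roots in the closed
   unit disc. Split F = Fa * Fs, where Fa collects the roots of F inside the unit w-disc (the
   reciprocals of the anti-stable q-roots), and let Fa_star be Fa with reciprocal roots; then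
   Fa_star / Fa is all-pass, of constant modulus g (the product of the moduli of those roots)
   on the unit circle. For admissible A, B the cost splits as

     J = lam / g^2 + (1 / 2 pi) (int Phir |R|^2 + lam / g^2 int |E - 1|^2),

   where R is the reference-to-error filter and E = (A + B K) H S Fa_star / Fa is holomorphic
   on the disc with E(0) = 1, so that int |E|^2 = int |E - 1|^2 + 2 pi by the mean value
   property. The pair A = Gam D Fa / (C Fa_star), B = D L / (C Fa_star Fs) has real, absolutely
   summable Taylor coefficients and gives R = 0, E = 1; hence J* = lam / g^2. Conversely, at
   the optimum R = 0 and E = 1 on the circle, and the maximum modulus principle gives
   Abar = Gam D Fa / (C Fa_star) on the closed disc. Everything else is read off this formula:
   the anti-stable zeros of Abar are the inverses of the roots of Fa, H = C / (Gam D) =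
   Fa / (Abar Fa_star), and on the circle lam = J* g^2 = J* |Fa_star / Fa|^2. *)

theory Submission
  imports Defs "HOL-Computational_Algebra.Fundamental_Theorem_Algebra"
begin

section \<open>Functions on the closed unit disc\<close>

lemma has_integral_cis_mean_value:
  fixes f :: "complex \<Rightarrow> complex"
  assumes "continuous_on (cball 0 1) f" "f holomorphic_on ball 0 1"
  shows "((\<lambda>t. f (cis t)) has_integral 2 * pi * f 0) {0..2*pi}"
proof -
  have "((\<lambda>u. f u / (u - 0)) has_contour_integral 2 * pi * \<i> * f 0) (part_circlepath 0 1 0 (2*pi))"
    using Cauchy_integral_circlepath[OF assms, of 0] by (simp add: circlepath_def)
  then have "((\<lambda>t. \<i> * f (cis t)) has_integral \<i> * (2 * pi * f 0)) {0..2*pi}"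
    by (simp add: has_contour_integral_part_circlepath_iff mult_ac)
  from has_integral_mult_right[OF this, of "- \<i>"] show ?thesis
    by (simp add: mult.assoc[symmetric])
qed

lemma has_integral_cis_minus_mean_value:
  fixes f :: "complex \<Rightarrow> complex"
  assumes "continuous_on (cball 0 1) f" "f holomorphic_on ball 0 1"
  shows "((\<lambda>t. f (cis (-t))) has_integral 2 * pi * f 0) {-pi..pi}"
proof -
  have "continuous_on (cball 0 1) (\<lambda>u. f (-u))"
    by (rule continuous_on_compose2[OF assms(1)]) (auto intro!: continuous_intros)
  moreover have "(f \<circ> uminus) holomorphic_on ball 0 1"
    by (rule holomorphic_on_compose_gen[OF _ assms(2)]) (auto intro!: holomorphic_intros)
  ultimately have "((\<lambda>t. f (- cis t)) has_integral 2 * pi * f 0) {0..2*pi}"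
    using has_integral_cis_mean_value[of "\<lambda>u. f (-u)"] by (simp add: o_def)
  \<comment> \<open>shift by pi, using - cis (t + pi) = cis t\<close>
  from has_integral_shift_real_ivl[OF this, of pi]
  have "((\<lambda>t. f (cis t)) has_integral 2 * pi * f 0) {-pi..pi}"
    by (simp add: cis_mult[symmetric, of _ pi])
  then have "((\<lambda>t. f (cis (-t))) has_integral 2 * pi * f 0) {-pi..-(-pi)}"
    by (subst has_integral_reflect_real)
  then show ?thesis
    by simp
qed

lemma holomorphic_vanishing_on_sphere:
  fixes f :: "complex \<Rightarrow> complex"
  assumes "continuous_on (cball c r) f" "f holomorphic_on ball c r"
    and "\<And>z. z \<in> sphere c r \<Longrightarrow> f z = 0" and "w \<in> cball c r"
  shows "f w = 0"
proof (cases "r \<le> 0")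
  case True
  then show ?thesis using assms(3,4) by (cases "r = 0") auto
next
  case False
  have "norm (f w) \<le> 0"
    by (rule maximum_modulus_frontier[of f "cball c r"]) (use assms False in auto)
  then show ?thesis by simp
qed

lemma continuous_on_cball_vanishing_off_finite:
  fixes f :: "'a::{real_normed_vector,perfect_space} \<Rightarrow> 'b::real_normed_vector"
  assumes "continuous_on (cball c r) f" "finite Z" "\<And>z. z \<in> cball c r - Z \<Longrightarrow> f z = 0"
    and "0 < r" "w \<in> cball c r"
  shows "f w = 0"
proof -
  have "w islimpt ball c r"
    using assms(4,5) by (simp add: islimpt_ball)
  moreover have "ball c r = (ball c r \<inter> Z) \<union> (ball c r - Z)"
    by blast
  ultimately have "w islimpt (ball c r - Z)"
    using islimpt_Un_finite[of "ball c r \<inter> Z" w "ball c r - Z"] assms(2) by simp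
  then have w: "w \<in> closure (ball c r - Z)"
    by (simp add: closure_def)
  have "closure (ball c r - Z) \<subseteq> cball c r"
    by (metis Diff_subset ball_subset_cball closed_cball closure_minimal order_trans)
  then have "continuous_on (closure (ball c r - Z)) f"
    using assms(1) continuous_on_subset by blast
  then show ?thesis
    by (rule continuous_constant_on_closure[OF _ _ w]) (use assms(3) in auto)
qed

lemma continuous_on_compose_cis_minus:
  "continuous_on (cball 0 1) f \<Longrightarrow> continuous_on S (\<lambda>\<omega>::real. f (cis (-\<omega>)))"
  by (rule continuous_on_compose2) (auto intro!: continuous_intros)

lemma negligible_poly_roots_on_circle:
  fixes p :: "complex poly"
  assumes "p \<noteq> 0"
  shows "negligible {\<omega> \<in> {-pi..pi}. poly p (cis (-\<omega>)) = 0}"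
proof (rule negligible_subset)
  show "negligible (insert pi ((\<lambda>z. - Arg z) ` {z. poly p z = 0}))"
    using poly_roots_finite[OF assms] by (simp add: negligible_finite)
  show "{\<omega> \<in> {-pi..pi}. poly p (cis (-\<omega>)) = 0} \<subseteq> insert pi ((\<lambda>z. - Arg z) ` {z. poly p z = 0})"
  proof
    fix \<omega> assume \<omega>: "\<omega> \<in> {\<omega> \<in> {-pi..pi}. poly p (cis (-\<omega>)) = 0}"
    show "\<omega> \<in> insert pi ((\<lambda>z. - Arg z) ` {z. poly p z = 0})"
    proof (cases "\<omega> = pi")
      case False
      with \<omega> have "Arg (cis (-\<omega>)) = -\<omega>"
        by (intro cis_Arg_unique) (auto simp: sgn_eq)
      with \<omega> show ?thesis
        by (auto intro!: image_eqI[of _ _ "cis (-\<omega>)"])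
    qed simp
  qed
qed

definition pseries :: "(nat \<Rightarrow> real) \<Rightarrow> complex \<Rightarrow> complex" where
  "pseries a w = (\<Sum>k. complex_of_real (a k) * w ^ k)"

lemma Aev_eq_pseries: "Aev a q = pseries a (inverse q)"
  by (simp add: Aev_def pseries_def)

lemma pseries_sums:
  assumes "summable (\<lambda>k. \<bar>a k\<bar>)" "norm w \<le> 1"
  shows "(\<lambda>k. complex_of_real (a k) * w ^ k) sums pseries a w"
proof -
  have "summable (\<lambda>k. norm (complex_of_real (a k) * w ^ k))"
  proof (rule summable_comparison_test'[OF assms(1)])
    show "norm (norm (complex_of_real (a k) * w ^ k)) \<le> \<bar>a k\<bar>" for k
      using assms(2) by (simp add: norm_mult norm_power mult_left_le power_le_one)
  qed
  then show ?thesis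
    unfolding pseries_def by (rule summable_sums[OF summable_norm_cancel])
qed

lemma continuous_on_pseries:
  assumes "summable (\<lambda>k. \<bar>a k\<bar>)"
  shows "continuous_on (cball 0 1) (pseries a)"
proof -
  have "uniform_limit (cball 0 1) (\<lambda>n w. \<Sum>k<n. complex_of_real (a k) * w ^ k) (pseries a) sequentially"
    unfolding pseries_def
    by (rule Weierstrass_m_test[OF _ assms]) (simp add: norm_mult norm_power mult_left_le power_le_one)
  then show ?thesis
    by (rule uniform_limit_theorem[rotated]) (auto intro!: continuous_intros always_eventually)
qed

lemma holomorphic_on_pseries:
  assumes "summable (\<lambda>k. \<bar>a k\<bar>)"
  shows "pseries a holomorphic_on ball 0 1"
  by (rule power_series_holomorphic[where a="\<lambda>k. complex_of_real (a k)"])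
     (use pseries_sums[OF assms] in auto)

lemma pseries_0 [simp]: "pseries a 0 = complex_of_real (a 0)"
  unfolding pseries_def by (subst suminf_finite[of "{0}"]) auto

lemma holomorphic_real_power_series:
  fixes f :: "complex \<Rightarrow> complex"
  assumes holo: "f holomorphic_on ball 0 R" and R: "1 < R"
    and real: "\<And>w. w \<in> ball 0 R \<Longrightarrow> f (cnj w) = cnj (f w)"
  obtains a where "summable (\<lambda>k. \<bar>a k\<bar>)" "\<And>w. norm w \<le> 1 \<Longrightarrow> pseries a w = f w"
proof -
  define c where "c k = (deriv ^^ k) f 0 / fact k" for k
  have sums: "(\<lambda>k. c k * w ^ k) sums f w" if "norm w < R" for w
    using holomorphic_power_series[OF holo, of w] that by (simp add: c_def)
  define x where "x = complex_of_real ((1 + R) / 2)"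
  have x: "norm x = (1 + R) / 2"
    using R unfolding x_def norm_of_real by simp
  then have "summable (\<lambda>k. c k * x ^ k)"
    using sums[of x] R by (simp add: sums_iff)
  then have "summable (\<lambda>k. norm (c k * 1 ^ k))"
    by (rule powser_insidea) (use R x in simp)
  then have abs: "summable (\<lambda>k. \<bar>Re (c k)\<bar>)"
    by (rule summable_comparison_test'[of _ 0]) (simp add: abs_Re_le_cmod)
  have "pseries (\<lambda>k. Re (c k)) w = f w" if w: "norm w \<le> 1" for w
  proof -
    \<comment> \<open>By the symmetry of f the conjugate series has the same sum, so their average,
      whose coefficients are the real parts, has it too.\<close>
    have "(\<lambda>k. cnj (c k * cnj w ^ k)) sums cnj (f (cnj w))"
      using sums[of "cnj w"] w R by (intro sums_cnj[THEN iffD2]) simp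
    then have "(\<lambda>k. cnj (c k) * w ^ k) sums f w"
      using real[of w] w R by simp
    then have "(\<lambda>k. (c k * w ^ k + cnj (c k) * w ^ k) / 2) sums ((f w + f w) / 2)"
      using sums[of w] w R by (intro sums_divide sums_add) auto
    moreover have "(c k * w ^ k + cnj (c k) * w ^ k) / 2 = complex_of_real (Re (c k)) * w ^ k" for k
      by (simp add: complex_add_cnj flip: distrib_right)
    ultimately show ?thesis
      by (simp add: pseries_def sums_iff)
  qed
  with abs show thesis
    by (rule that)
qed

lemma has_integral_0_weighted_imp_0:
  fixes g h :: "real \<Rightarrow> real"
  assumes h: "continuous_on {a..b} h" "\<And>x. x \<in> {a..b} \<Longrightarrow> 0 \<le> h x"
    and g: "\<And>x. 0 < g x" and int: "((\<lambda>x. g x * h x) has_integral 0) {a..b}"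
    and "a < b" "x \<in> {a..b}"
  shows "h x = 0"
proof -
  let ?f = "\<lambda>x. g x * h x"
  have nonneg: "0 \<le> ?f x" if "x \<in> {a..b}" for x
    using g[of x] h(2)[OF that] by simp
  have af: "?f absolutely_integrable_on {a..b}"
    using nonneg has_integral_integrable[OF int]
    by (intro absolutely_integrable_onI integrable_eq[OF has_integral_integrable[OF int]]) auto
  have "integral {a..b} ?f = set_lebesgue_integral lebesgue {a..b} ?f"
    using af by (intro set_lebesgue_integral_eq_integral(2)[symmetric])
  then have "(LINT x|lebesgue. indicator {a..b} x *\<^sub>R ?f x) = 0"
    using int by (simp add: integral_unique set_lebesgue_integral_def)
  then have "AE x in lebesgue. indicator {a..b} x *\<^sub>R ?f x = 0"
    using af nonneg
    by (subst (asm) integral_nonneg_eq_0_iff_AE) (auto simp: set_integrable_def indicator_def)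
  moreover have zero: "y \<in> {x \<in> {a..b}. h x = 0}"
    if "indicator {a..b} y *\<^sub>R ?f y = 0" "y \<in> {a<..<b}" for y
    using that g[of y] by (auto simp: indicator_def)
  ultimately have ae: "AE x \<in> {a<..<b} in lebesgue. x \<in> {x \<in> {a..b}. h x = 0}"
    by eventually_elim (use zero in blast)
  have "closed {x \<in> {a..b}. h x = 0}"
    using continuous_closed_preimage_constant[OF h(1)] by simp
  then have "h y = 0" if "y \<in> {a<..<b}" for y
    using mem_closed_if_AE_lebesgue_open[OF open_greaterThanLessThan _ ae that] by auto
  moreover have "continuous_on (closure {a<..<b}) h"
    using h(1) \<open>a < b\<close> by simp
  ultimately show ?thesis
    using continuous_constant_on_closure[of "{a<..<b}" h] assms(5,6) by simp
qed

section \<open>Polynomials given by their roots\<close>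

lemma map_poly_cnj_mult: "map_poly cnj (p * q) = map_poly cnj p * map_poly cnj (q :: complex poly)"
  by (intro poly_eqI) (simp add: coeff_map_poly coeff_mult cnj_sum)

lemma map_poly_cnj_prod_mset:
  "map_poly cnj (\<Prod>x\<in>#M. f x) = (\<Prod>x\<in>#M. map_poly cnj (f x :: complex poly))"
  by (induction M) (simp_all add: map_poly_cnj_mult)

lemma map_poly_cnj_power: "map_poly cnj (p ^ n) = map_poly cnj (p :: complex poly) ^ n"
  by (induction n) (simp_all add: map_poly_cnj_mult)

definition self_conjugate :: "complex poly \<Rightarrow> bool" where
  "self_conjugate p \<longleftrightarrow> map_poly cnj p = p"

lemma poly_cnj_self_conjugate: "self_conjugate p \<Longrightarrow> poly p (cnj w) = cnj (poly p w)"
  unfolding self_conjugate_def by (metis poly_cnj)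

lemma self_conjugate_of_real: "self_conjugate (map_poly complex_of_real p)"
  unfolding self_conjugate_def by (simp add: map_poly_map_poly o_def)

lemma count_image_mset_involution:
  assumes "\<And>y. f (f y) = y"
  shows "count (image_mset f A) x = count A (f x)"
proof (induction A)
  case (add a A)
  have "f a = x \<longleftrightarrow> a = f x"
    by (metis assms)
  with add show ?case
    by simp
qed simp

lemma order_cnj_le:
  assumes "self_conjugate p" "p \<noteq> 0"
  shows "order a p \<le> order (cnj a) p"
proof -
  obtain r where r: "p = [:-a, 1:] ^ order a p * r"
    using order_1[of a p] by (elim dvdE)
  then have "map_poly cnj p = map_poly cnj ([:-a, 1:] ^ order a p) * map_poly cnj r"
    by (metis map_poly_cnj_mult)
  then have "p = [:-cnj a, 1:] ^ order a p * map_poly cnj r"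
    using assms(1) by (simp add: self_conjugate_def map_poly_cnj_power map_poly_pCons)
  then have "[:-cnj a, 1:] ^ order a p dvd p"
    by (rule dvdI)
  then show ?thesis
    using assms(2) by (simp add: order_divides)
qed

lemma proots_self_conjugate:
  assumes "self_conjugate p"
  shows "image_mset cnj (proots p) = proots p"
proof (cases "p = 0")
  case False
  have "order (cnj a) p = order a p" for a
    using order_cnj_le[OF assms False, of a] order_cnj_le[OF assms False, of "cnj a"] by simp
  then show ?thesis
    by (intro multiset_eqI) (simp add: count_image_mset_involution False)
qed simp

text \<open>Since \<^term>\<open>inverse (0::complex) = 0\<close>, an element 0 of M contributes the factor 1.\<close>

definition roots_poly :: "complex multiset \<Rightarrow> complex poly" where
  "roots_poly M = (\<Prod>x\<in>#M. [:1, - inverse x:])"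

definition recip_roots_poly :: "complex multiset \<Rightarrow> complex poly" where
  "recip_roots_poly M = (\<Prod>x\<in>#M. [:1, - x:])"

lemma poly_roots_poly: "poly (roots_poly M) w = (\<Prod>x\<in>#M. 1 - w / x)"
  by (simp add: roots_poly_def poly_prod_mset field_simps)

lemma poly_recip_roots_poly: "poly (recip_roots_poly M) w = (\<Prod>x\<in>#M. 1 - x * w)"
  by (simp add: recip_roots_poly_def poly_prod_mset field_simps)

lemma roots_poly_union: "roots_poly (M + N) = roots_poly M * roots_poly N"
  by (simp add: roots_poly_def)

lemma self_conjugate_roots_poly:
  assumes "image_mset cnj M = M"
  shows "self_conjugate (roots_poly M)"
proof -
  have "map_poly cnj (roots_poly M) = roots_poly (image_mset cnj M)"
    by (simp add: roots_poly_def map_poly_cnj_prod_mset map_poly_pCons image_mset.compositionality o_def)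
  with assms show ?thesis
    by (simp add: self_conjugate_def)
qed

lemma self_conjugate_recip_roots_poly:
  assumes "image_mset cnj M = M"
  shows "self_conjugate (recip_roots_poly M)"
proof -
  have "map_poly cnj (recip_roots_poly M) = recip_roots_poly (image_mset cnj M)"
    by (simp add: recip_roots_poly_def map_poly_cnj_prod_mset map_poly_pCons image_mset.compositionality o_def)
  with assms show ?thesis
    by (simp add: self_conjugate_def)
qed

lemma poly_eq_roots_poly:
  fixes p :: "complex poly"
  assumes p0: "poly p 0 = 1"
  shows "p = roots_poly (proots p)"
proof -
  define c where "c = lead_coeff p * (\<Prod>x\<in>#proots p. - x)"
  have "p \<noteq> 0"
    using p0 by auto
  then have nz: "x \<noteq> 0" if "x \<in># proots p" for x
    using that p0 by auto
  have decomp: "poly p w = c * poly (roots_poly (proots p)) w" for w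
  proof -
    have "poly p w = lead_coeff p * (\<Prod>x\<in>#proots p. w - x)"
      by (subst complex_poly_decompose_multiset[symmetric]) (simp add: poly_prod_mset)
    also have "(\<Prod>x\<in>#proots p. w - x) = (\<Prod>x\<in>#proots p. (- x) * (1 - w / x))"
      using nz by (intro arg_cong[where f=prod_mset] image_mset_cong) (auto simp: field_simps)
    also have "\<dots> = (\<Prod>x\<in>#proots p. - x) * (\<Prod>x\<in>#proots p. 1 - w / x)"
      by (rule prod_mset.distrib)
    finally show ?thesis
      by (simp add: c_def poly_roots_poly mult.assoc)
  qed
  have "c = 1"
    using decomp[of 0] p0 by (simp add: poly_roots_poly)
  with decomp show ?thesis
    by (simp flip: poly_eq_poly_eq_iff add: fun_eq_iff)
qed

lemma norm_prod_mset: "norm (\<Prod>x\<in>#M. f x) = (\<Prod>x\<in>#M. norm (f x :: 'a::real_normed_field))"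
  by (induction M) (simp_all add: norm_mult)

lemma norm_recip_roots_poly_on_circle:
  assumes M: "image_mset cnj M = M" "0 \<notin># M" and w: "norm w = 1"
  shows "norm (poly (recip_roots_poly M) w) = (\<Prod>x\<in>#M. norm x) * norm (poly (roots_poly M) w)"
proof -
  have "cnj w * w = 1"
    using w complex_norm_square[of w] by (simp add: mult.commute)
  then have "1 - x * w = w * (cnj w - x)" for x
    by (simp add: algebra_simps)
  then have "norm (1 - x * w) = norm (cnj w - x)" for x
    using w by (simp add: norm_mult)
  then have "norm (poly (recip_roots_poly M) w) = (\<Prod>x\<in>#M. norm (cnj w - x))"
    by (simp add: poly_recip_roots_poly norm_prod_mset image_mset.compositionality o_def)
  also have "\<dots> = (\<Prod>x\<in>#image_mset cnj M. norm (cnj w - x))"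
    using M(1) by simp
  also have "\<dots> = (\<Prod>x\<in>#M. norm x * norm (1 - w / x))"
  proof -
    have "norm (cnj w - cnj x) = norm x * norm (1 - w / x)" if "x \<in># M" for x
    proof -
      have "x \<noteq> 0"
        using that M(2) by auto
      then have "1 - w / x = (x - w) / x"
        by (simp add: field_simps)
      then have "norm x * norm (1 - w / x) = norm (x - w)"
        using \<open>x \<noteq> 0\<close> by (simp add: norm_divide)
      then show ?thesis
        by (metis complex_cnj_diff complex_mod_cnj norm_minus_commute)
    qed
    then show ?thesis
      by (simp add: image_mset.compositionality o_def cong: image_mset_cong)
  qed
  finally show ?thesis
    by (simp add: poly_roots_poly norm_prod_mset prod_mset.distrib image_mset.compositionality o_def)
qed

lemma poly_nonzero_on_larger_ball:
  fixes p :: "complex poly"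
  assumes "p \<noteq> 0" "\<And>w. norm w \<le> 1 \<Longrightarrow> poly p w \<noteq> 0"
  obtains R where "1 < R" "\<And>w. norm w < R \<Longrightarrow> poly p w \<noteq> 0"
proof -
  define Z where "Z = {w. poly p w = 0}"
  have "finite Z"
    unfolding Z_def by (rule poly_roots_finite[OF assms(1)])
  define R where "R = (if Z = {} then 2 else Min (norm ` Z))"
  have "1 < R"
  proof (cases "Z = {}")
    case False
    then have "R \<in> norm ` Z"
      unfolding R_def using \<open>finite Z\<close> by simp
    with assms(2) show ?thesis
      by (force simp: Z_def)
  qed (simp add: R_def)
  moreover have "poly p w \<noteq> 0" if "norm w < R" for w
    using that \<open>finite Z\<close> by (auto simp: R_def Z_def split: if_splits)
  ultimately show thesis
    by (rule that)
qed

lemma zorder_roots_poly_inverse: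
  fixes f h :: "complex \<Rightarrow> complex"
  assumes S: "open S" "p \<in> S" "0 \<notin> S" and h: "h holomorphic_on S" "h p \<noteq> 0"
    and f: "\<And>q. q \<in> S \<Longrightarrow> f q = poly (roots_poly M) (inverse q) * h q"
  shows "zorder f p = count M (inverse p)"
proof -
  define m where "m = count M (inverse p)"
  define N where "N = filter_mset (\<lambda>x. x \<noteq> inverse p) M"
  have M: "M = replicate_mset m (inverse p) + N"
    using multiset_partition[of M "\<lambda>x. x = inverse p"]
    by (simp add: m_def N_def filter_eq_replicate_mset)
  define g where "g q = poly (roots_poly N) (inverse q) * h q / q ^ m" for q
  have "zorder f p = int m"
  proof (rule zorder_eqI[OF S(1,2)])
    show "g holomorphic_on S"
      unfolding g_def using S(3) h(1) by (fastforce intro!: holomorphic_intros)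
    have "poly (roots_poly N) (inverse p) \<noteq> 0"
      by (auto simp: poly_roots_poly N_def prod_mset_zero_iff field_simps)
    then show "g p \<noteq> 0"
      using S(2,3) h(2) by (auto simp: g_def)
    show "f q = g q * (q - p) powi int m" if "q \<in> S" "q \<noteq> p" for q
    proof -
      have "q \<noteq> 0" "p \<noteq> 0"
        using that S by auto
      then have "poly (roots_poly (replicate_mset m (inverse p))) (inverse q) = ((q - p) / q) ^ m"
        by (simp add: poly_roots_poly field_simps)
      then have "f q = ((q - p) / q) ^ m * poly (roots_poly N) (inverse q) * h q"
        using f[OF that(1)] by (subst (asm) M) (simp add: roots_poly_union)
      then show ?thesis
        using \<open>q \<noteq> 0\<close> by (simp add: g_def power_divide)
    qed
  qed
  then show ?thesis
    by (simp add: m_def)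
qed

lemma prod_list_map_inverse_roots_poly:
  "(\<Prod>p\<leftarrow>map inverse xs. 1 - p / q) = poly (roots_poly (mset xs)) (inverse q)"
  by (induction xs) (simp_all add: roots_poly_def field_simps)

lemma prod_list_map_inverse_recip_roots_poly:
  "(\<Prod>p\<leftarrow>map inverse xs. 1 - 1 / (p * q)) = poly (recip_roots_poly (mset xs)) (inverse q)"
  by (induction xs) (simp_all add: recip_roots_poly_def field_simps)

section \<open>The closed-loop identification cost\<close>

abbreviation cpoly :: "real poly \<Rightarrow> complex poly" where
  "cpoly \<equiv> map_poly complex_of_real"

lemma cpoly_mult: "cpoly (p * q) = cpoly p * cpoly q"
  by (intro poly_eqI) (simp add: coeff_map_poly coeff_mult of_real_sum)

lemma cpoly_add: "cpoly (p + q) = cpoly p + cpoly q"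
  by (intro poly_eqI) (simp add: coeff_map_poly)

lemma poly_cpoly_0: "poly (cpoly p) 0 = complex_of_real (coeff p 0)"
  by (simp add: poly_0_coeff_0 coeff_map_poly)

lemma cpoly_nonzero: "coeff p 0 \<noteq> 0 \<Longrightarrow> cpoly p \<noteq> 0"
  by (metis coeff_0 coeff_map_poly of_real_0 of_real_eq_0_iff)

lemma qev_eq_poly: "qev p q = poly (cpoly p) (inverse q)"
  by (simp add: qev_def)

lemma stable_qpoly_nonzero:
  assumes "stable_qpoly p" "coeff p 0 \<noteq> 0" "norm w \<le> 1"
  shows "poly (cpoly p) w \<noteq> 0"
proof (cases "w = 0")
  case False
  then have "1 \<le> cmod (inverse w)"
    using assms(3) by (simp add: norm_inverse one_le_inverse_iff)
  then have "qev p (inverse w) \<noteq> 0"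
    using assms(1) False unfolding stable_qpoly_def by (metis inverse_nonzero_iff_nonzero not_less)
  then show ?thesis
    by (simp add: qev_eq_poly)
qed (use assms(2) in \<open>simp add: poly_cpoly_0\<close>)

text \<open>Here G = l / (g f), K = nk / dk, H = c / (g d) and S = 1 / (1 + K G), with closed-loop
  characteristic value ch.\<close>

lemma closed_loop_transfers:
  fixes A B g f dk nk l c d ch :: "'a::field"
  assumes "g \<noteq> 0" "f \<noteq> 0" "dk \<noteq> 0" "d \<noteq> 0" "ch = g * f * dk + l * nk" "ch \<noteq> 0"
  defines "S \<equiv> 1 / (1 + nk / dk * (l / (g * f)))"
  shows "A * (l / (g * f)) * S - B * S = dk * (A * l - B * g * f) / ch"
    and "(A + B * (nk / dk)) * (c / (g * d)) * S = (A * dk + B * nk) * f * c / (d * ch)"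
proof -
  have S: "S = dk * g * f / ch"
    using assms(1-3,5) by (simp add: S_def field_simps)
  show "A * (l / (g * f)) * S - B * S = dk * (A * l - B * g * f) / ch"
    unfolding S using assms(1,2,6) by (simp add: field_simps)
  show "(A + B * (nk / dk)) * (c / (g * d)) * S = (A * dk + B * nk) * f * c / (d * ch)"
    unfolding S using assms(1-4,6) by (simp add: field_simps)
qed

lemma closed_loop_defect:
  fixes A B g f fa fs fas dk nk l c d ch :: "'a::field"
  assumes "ch = g * f * dk + l * nk" "f = fa * fs" "d \<noteq> 0" "ch \<noteq> 0"
  shows "dk * (A * c * fas - g * d * fa)
    = g * d * fa * dk * ((A * dk + B * nk) * fs * fas * c / (d * ch) - 1)
      + nk * c * fas * (dk * (A * l - B * g * f) / ch)"
  using assms(3,4) by (simp add: field_simps) (use assms(1,2) in algebra)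

lemma optimal_transfer_identities:
  fixes g d fa fas fs c l dk nk ch :: "'a::field"
  assumes "c \<noteq> 0" "fas \<noteq> 0" "fs \<noteq> 0" "d \<noteq> 0" "ch \<noteq> 0" "ch = g * (fa * fs) * dk + l * nk"
  defines "A \<equiv> g * d * fa / (c * fas)" and "B \<equiv> d * l / (c * fas * fs)"
  shows "A * l - B * g * (fa * fs) = 0" and "(A * dk + B * nk) * fs * fas * c / (d * ch) = 1"
proof -
  have A: "A * c * fas = g * d * fa" and B: "B * c * fas * fs = d * l"
    using assms(1-3) by (simp_all add: A_def B_def)
  show "A * l - B * g * (fa * fs) = 0"
    using assms(1-3) by (simp add: A_def B_def)
  have "(A * dk + B * nk) * fs * fas * c = (A * c * fas) * fs * dk + (B * c * fas * fs) * nk"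
    by (simp add: algebra_simps)
  also have "\<dots> = d * ch"
    unfolding A B assms(6) by (simp add: algebra_simps)
  finally show "(A * dk + B * nk) * fs * fas * c / (d * ch) = 1"
    using assms(4,5) by simp
qed

locale closed_loop_arx =
  fixes L Gam F C D nK dK :: "real poly" and Phir :: "real \<Rightarrow> real" and lam :: real
  assumes L0: "coeff L 0 = 0"
    and Gam0: "coeff Gam 0 = 1" and F0: "coeff F 0 = 1" and C0: "coeff C 0 = 1" and D0: "coeff D 0 = 1"
    and C_stable: "stable_qpoly C" and D_stable: "stable_qpoly D"
    and F_circle: "\<forall>q. cmod q = 1 \<longrightarrow> qev F q \<noteq> 0"
    and H_stable: "tf_stable C (Gam * D)"
    and K_stab: "stabilizing L Gam F nK dK"
    and lam_pos: "0 < lam" and Phir_pos: "\<forall>\<omega>. 0 < Phir \<omega>" and Phir_int: "Phir integrable_on {-pi..pi}"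
begin

definition char_poly :: "complex poly" where
  "char_poly = cpoly (Gam * F * dK + L * nK)"

text \<open>Polynomials are evaluated at w = q^-1, so Fa_roots are the reciprocals of the anti-stable
  roots of F; Fa and Fa_star are the paper's F_a and F_a^*.\<close>

definition Fa_roots :: "complex multiset" where
  "Fa_roots = filter_mset (\<lambda>x. norm x < 1) (proots (cpoly F))"

definition Fs_roots :: "complex multiset" where
  "Fs_roots = filter_mset (\<lambda>x. 1 < norm x) (proots (cpoly F))"

abbreviation "Fa \<equiv> roots_poly Fa_roots"
abbreviation "Fa_star \<equiv> recip_roots_poly Fa_roots"
abbreviation "Fs \<equiv> roots_poly Fs_roots"

definition allpass_gain :: real where
  "allpass_gain = (\<Prod>x\<in>#Fa_roots. norm x)"

lemma dK0: "coeff dK 0 \<noteq> 0"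
  using K_stab by (simp add: stabilizing_def)

lemma poly_char_poly:
  "poly char_poly w = poly (cpoly Gam) w * poly (cpoly F) w * poly (cpoly dK) w + poly (cpoly L) w * poly (cpoly nK) w"
  by (simp add: char_poly_def cpoly_mult cpoly_add)

lemma F_roots_nonzero: "x \<in># proots (cpoly F) \<Longrightarrow> x \<noteq> 0"
  using cpoly_nonzero[of F] F0 by (auto simp: poly_cpoly_0)

lemma Fa_roots_in_disc: "x \<in># Fa_roots \<Longrightarrow> x \<noteq> 0 \<and> norm x < 1"
  using F_roots_nonzero by (simp add: Fa_roots_def)

lemma F_nonzero_on_circle: "norm w = 1 \<Longrightarrow> poly (cpoly F) w \<noteq> 0"
  using F_circle[rule_format, of "inverse w"] by (simp add: qev_eq_poly norm_inverse)

lemma cpoly_F_factor: "cpoly F = Fa * Fs"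
proof -
  have "cpoly F = roots_poly (proots (cpoly F))"
    by (rule poly_eq_roots_poly) (simp add: poly_cpoly_0 F0)
  moreover have "norm x \<noteq> 1" if "x \<in># proots (cpoly F)" for x
    using that F_nonzero_on_circle cpoly_nonzero[of F] F0 by auto
  then have "filter_mset (\<lambda>x. \<not> norm x < 1) (proots (cpoly F)) = Fs_roots"
    unfolding Fs_roots_def by (intro filter_mset_cong) force+
  then have "proots (cpoly F) = Fa_roots + Fs_roots"
    using multiset_partition[of "proots (cpoly F)" "\<lambda>x. norm x < 1"] by (simp add: Fa_roots_def)
  ultimately show ?thesis
    by (metis roots_poly_union)
qed

lemma Gam_nonzero_on_disk:
  assumes "norm w \<le> 1"
  shows "poly (cpoly Gam) w \<noteq> 0"
proof
  assume Gam: "poly (cpoly Gam) w = 0"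
  define g where "g = gcd C (Gam * D)"
  \<comment> \<open>The zero of Gam cannot be cancelled, since C has no zeros in the disc.\<close>
  obtain h where "C = g * h"
    unfolding g_def by (metis gcd_dvd1 dvdE)
  with stable_qpoly_nonzero[OF C_stable _ assms] C0 have "poly (cpoly g) w \<noteq> 0"
    by (auto simp: cpoly_mult)
  moreover have "Gam * D = ((Gam * D) div g) * g"
    unfolding g_def by simp
  then have "poly (cpoly ((Gam * D) div g)) w * poly (cpoly g) w = 0"
    using Gam by (metis cpoly_mult mult_eq_0_iff poly_mult)
  ultimately have "qev ((Gam * D) div g) (inverse w) = 0"
    by (simp add: qev_eq_poly)
  moreover have "w \<noteq> 0"
    using Gam Gam0 by (auto simp: poly_cpoly_0)
  then have "1 \<le> cmod (inverse w)"
    using assms by (simp add: norm_inverse one_le_inverse_iff)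
  ultimately show False
    using H_stable by (simp add: tf_stable_def g_def)
qed

lemma char_poly_nonzero_on_disk:
  assumes "norm w \<le> 1"
  shows "poly char_poly w \<noteq> 0"
proof (cases "w = 0")
  case True
  then show ?thesis
    using dK0 by (simp add: char_poly_def poly_cpoly_0 coeff_mult_0 L0 Gam0 F0)
next
  case False
  then have "1 \<le> cmod (inverse w)"
    using assms by (simp add: norm_inverse one_le_inverse_iff)
  then have "poly char_poly (inverse (inverse w)) \<noteq> 0"
    using K_stab unfolding stabilizing_def qev_eq_poly char_poly_def by blast
  then show ?thesis
    by simp
qed

lemma Fa_star_nonzero_on_disk:
  assumes "norm w \<le> 1"
  shows "poly Fa_star w \<noteq> 0"
proof
  assume "poly Fa_star w = 0"
  then obtain x where x: "x \<in># Fa_roots" "x * w = 1"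
    by (auto simp: poly_recip_roots_poly prod_mset_zero_iff)
  then have "norm x * norm w = 1"
    by (metis norm_mult norm_one)
  moreover have "norm x < 1"
    using x(1) by (simp add: Fa_roots_def)
  moreover have "norm x * norm w \<le> norm x"
    using assms by (simp add: mult_left_le)
  ultimately show False
    by simp
qed

lemma nonzero_on_disk:
  assumes "norm w \<le> 1"
  shows "poly (cpoly C) w \<noteq> 0" "poly (cpoly D) w \<noteq> 0" "poly (cpoly Gam) w \<noteq> 0"
    and "poly char_poly w \<noteq> 0" "poly Fa_star w \<noteq> 0" "poly Fs w \<noteq> 0"
  using stable_qpoly_nonzero[OF C_stable _ assms] stable_qpoly_nonzero[OF D_stable _ assms] C0 D0
    Gam_nonzero_on_disk[OF assms] char_poly_nonzero_on_disk[OF assms] Fa_star_nonzero_on_disk[OF assms]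
    assms
  by (auto simp: poly_roots_poly prod_mset_zero_iff Fs_roots_def)

lemma Fa_nonzero_on_circle: "norm w = 1 \<Longrightarrow> poly Fa w \<noteq> 0"
  using F_nonzero_on_circle by (simp add: cpoly_F_factor)

lemma Fa_roots_cnj: "image_mset cnj Fa_roots = Fa_roots"
  and Fs_roots_cnj: "image_mset cnj Fs_roots = Fs_roots"
proof -
  have "image_mset cnj (filter_mset (\<lambda>x. P (cnj x)) (proots (cpoly F))) = filter_mset P (proots (cpoly F))" for P
    using image_mset_filter_mset_swap[of cnj P] proots_self_conjugate[OF self_conjugate_of_real[of F]]
    by simp
  from this[of "\<lambda>x. norm x < 1"] this[of "\<lambda>x. 1 < norm x"]
  show "image_mset cnj Fa_roots = Fa_roots" "image_mset cnj Fs_roots = Fs_roots"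
    by (simp_all add: Fa_roots_def Fs_roots_def)
qed

lemma allpass_gain_pos: "0 < allpass_gain"
proof -
  have "0 < norm (prod_mset Fa_roots)"
    using F_roots_nonzero by (auto simp: Fa_roots_def prod_mset_zero_iff)
  then show ?thesis
    using norm_prod_mset[of "\<lambda>x. x" Fa_roots, simplified] unfolding allpass_gain_def by linarith
qed

lemma norm_Fa_star_on_circle:
  assumes "norm w = 1"
  shows "norm (poly Fa_star w) = allpass_gain * norm (poly Fa w)"
  unfolding allpass_gain_def
  by (rule norm_recip_roots_poly_on_circle[OF Fa_roots_cnj _ assms])
     (use F_roots_nonzero in \<open>auto simp: Fa_roots_def\<close>)

definition ref_filter :: "(nat \<Rightarrow> real) \<Rightarrow> (nat \<Rightarrow> real) \<Rightarrow> complex \<Rightarrow> complex" where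
  "ref_filter a b w = poly (cpoly dK) w *
     (pseries a w * poly (cpoly L) w - pseries b w * poly (cpoly Gam) w * poly (cpoly F) w) / poly char_poly w"

text \<open>On the circle the noise-to-error transfer (A + B K) H S is noise_filter times the all-pass
  factor Fa / Fa_star; without that factor it is holomorphic on the disc and equals 1 at 0.\<close>

definition noise_filter :: "(nat \<Rightarrow> real) \<Rightarrow> (nat \<Rightarrow> real) \<Rightarrow> complex \<Rightarrow> complex" where
  "noise_filter a b w = (pseries a w * poly (cpoly dK) w + pseries b w * poly (cpoly nK) w)
     * poly Fs w * poly Fa_star w * poly (cpoly C) w / (poly (cpoly D) w * poly char_poly w)"

definition cost_density :: "(nat \<Rightarrow> real) \<Rightarrow> (nat \<Rightarrow> real) \<Rightarrow> real \<Rightarrow> real" where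
  "cost_density a b \<omega> =
     (let z = cis \<omega>; G = tfG L Gam F z; H = tfH C Gam D z; K = tfK nK dK z;
          S = 1 / (1 + K * G); A = Aev a z; B = Aev b z
      in (cmod (A * G * S - B * S))\<^sup>2 * Phir \<omega> + lam * (cmod ((A + B * K) * H * S))\<^sup>2)"

lemma arx_cost_eq_integral:
  "arx_cost L Gam F C D nK dK Phir lam a b = integral {-pi..pi} (cost_density a b) / (2 * pi)"
  by (simp add: arx_cost_def cost_density_def[abs_def])

lemma cost_density_eq:
  assumes dK: "poly (cpoly dK) (cis (-\<omega>)) \<noteq> 0"
  shows "cost_density a b \<omega> = Phir \<omega> * (cmod (ref_filter a b (cis (-\<omega>))))\<^sup>2
    + lam / allpass_gain\<^sup>2 * (cmod (noise_filter a b (cis (-\<omega>))))\<^sup>2"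
proof -
  define w where "w = cis (-\<omega>)"
  have w: "norm w = 1"
    by (simp add: w_def)
  have nz: "poly (cpoly Gam) w \<noteq> 0" "poly (cpoly F) w \<noteq> 0" "poly (cpoly dK) w \<noteq> 0"
      "poly (cpoly D) w \<noteq> 0" "poly char_poly w \<noteq> 0" "poly Fa_star w \<noteq> 0"
    using nonzero_on_disk[of w] F_nonzero_on_circle[OF w] dK w by (simp_all add: w_def)
  have "cost_density a b \<omega> = (cmod (ref_filter a b w))\<^sup>2 * Phir \<omega> + lam *
      (cmod ((pseries a w * poly (cpoly dK) w + pseries b w * poly (cpoly nK) w) * poly (cpoly F) w
        * poly (cpoly C) w / (poly (cpoly D) w * poly char_poly w)))\<^sup>2"
    unfolding cost_density_def Let_def tfG_def tfK_def tfH_def qev_eq_poly Aev_eq_pseries cis_inverse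
      w_def[symmetric] ref_filter_def
    by (simp only: closed_loop_transfers[OF nz(1-4) poly_char_poly nz(5)])
  also have "(pseries a w * poly (cpoly dK) w + pseries b w * poly (cpoly nK) w) * poly (cpoly F) w
        * poly (cpoly C) w / (poly (cpoly D) w * poly char_poly w)
      = noise_filter a b w * (poly Fa w / poly Fa_star w)"
    using nz(6) by (simp add: noise_filter_def cpoly_F_factor field_simps)
  also have "(cmod (noise_filter a b w * (poly Fa w / poly Fa_star w)))\<^sup>2
      = (cmod (noise_filter a b w))\<^sup>2 / allpass_gain\<^sup>2"
    using norm_Fa_star_on_circle[OF w] Fa_nonzero_on_circle[OF w] allpass_gain_pos
    by (simp add: norm_mult norm_divide power_divide power_mult_distrib)
  finally show ?thesis
    by (simp add: w_def mult.commute)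
qed

lemma continuous_on_ref_filter: "arx_adm a b \<Longrightarrow> continuous_on (cball 0 1) (ref_filter a b)"
  unfolding ref_filter_def arx_adm_def using nonzero_on_disk
  by (auto intro!: continuous_intros continuous_on_pseries)

lemma continuous_on_noise_filter: "arx_adm a b \<Longrightarrow> continuous_on (cball 0 1) (noise_filter a b)"
  unfolding noise_filter_def arx_adm_def using nonzero_on_disk
  by (auto intro!: continuous_intros continuous_on_pseries)

lemma holomorphic_on_noise_filter: "arx_adm a b \<Longrightarrow> noise_filter a b holomorphic_on ball 0 1"
  unfolding noise_filter_def arx_adm_def using nonzero_on_disk
  by (auto intro!: holomorphic_intros holomorphic_on_pseries)

lemma noise_filter_0: "arx_adm a b \<Longrightarrow> noise_filter a b 0 = 1"
  unfolding noise_filter_def arx_adm_def using dK0 nonzero_on_disk(4)[of 0]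
  by (simp add: poly_cpoly_0 poly_roots_poly poly_recip_roots_poly C0 D0 char_poly_def coeff_mult_0 L0 Gam0 F0)

definition ref_energy :: "(nat \<Rightarrow> real) \<Rightarrow> (nat \<Rightarrow> real) \<Rightarrow> real" where
  "ref_energy a b = integral {-pi..pi} (\<lambda>\<omega>. Phir \<omega> * (cmod (ref_filter a b (cis (-\<omega>))))\<^sup>2)"

definition noise_excess :: "(nat \<Rightarrow> real) \<Rightarrow> (nat \<Rightarrow> real) \<Rightarrow> real" where
  "noise_excess a b = integral {-pi..pi} (\<lambda>\<omega>. (cmod (noise_filter a b (cis (-\<omega>)) - 1))\<^sup>2)"

lemma has_integral_ref_energy:
  assumes "arx_adm a b"
  shows "((\<lambda>\<omega>. Phir \<omega> * (cmod (ref_filter a b (cis (-\<omega>))))\<^sup>2) has_integral ref_energy a b) {-pi..pi}"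
proof -
  have c: "continuous_on {-pi..pi} (\<lambda>\<omega>. (cmod (ref_filter a b (cis (-\<omega>))))\<^sup>2)"
    by (intro continuous_intros continuous_on_compose_cis_minus continuous_on_ref_filter assms)
  have "Phir absolutely_integrable_on {-pi..pi}"
    using Phir_int Phir_pos by (intro nonnegative_absolutely_integrable_1) (auto simp: less_imp_le)
  moreover have "(\<lambda>\<omega>. (cmod (ref_filter a b (cis (-\<omega>))))\<^sup>2) \<in> borel_measurable (lebesgue_on {-pi..pi})"
    by (rule continuous_imp_measurable_on_sets_lebesgue[OF c]) simp
  moreover have "bounded ((\<lambda>\<omega>. (cmod (ref_filter a b (cis (-\<omega>))))\<^sup>2) ` {-pi..pi})"
    by (rule compact_imp_bounded[OF compact_continuous_image[OF c]]) simp
  ultimately have "(\<lambda>\<omega>. (cmod (ref_filter a b (cis (-\<omega>))))\<^sup>2 * Phir \<omega>) absolutely_integrable_on {-pi..pi}"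
    by (intro absolutely_integrable_bounded_measurable_product_real) auto
  then have "(\<lambda>\<omega>. Phir \<omega> * (cmod (ref_filter a b (cis (-\<omega>))))\<^sup>2) integrable_on {-pi..pi}"
    by (simp add: absolutely_integrable_on_def mult.commute)
  then show ?thesis
    unfolding ref_energy_def by (rule integrable_integral)
qed

lemma has_integral_noise_excess:
  assumes "arx_adm a b"
  shows "((\<lambda>\<omega>. (cmod (noise_filter a b (cis (-\<omega>)) - 1))\<^sup>2) has_integral noise_excess a b) {-pi..pi}"
  unfolding noise_excess_def
  by (intro integrable_integral integrable_continuous_interval continuous_intros continuous_on_compose_cis_minus
      continuous_on_noise_filter assms)

lemma has_integral_noise_filter_sq:
  assumes "arx_adm a b"
  shows "((\<lambda>\<omega>. (cmod (noise_filter a b (cis (-\<omega>))))\<^sup>2) has_integral noise_excess a b + 2 * pi) {-pi..pi}"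
proof -
  have "((\<lambda>\<omega>. noise_filter a b (cis (-\<omega>))) has_integral complex_of_real (2 * pi)) {-pi..pi}"
    using has_integral_cis_minus_mean_value[OF continuous_on_noise_filter holomorphic_on_noise_filter, OF assms assms]
    by (simp add: noise_filter_0[OF assms])
  from has_integral_linear[OF this bounded_linear_Re]
  have "((\<lambda>\<omega>. Re (noise_filter a b (cis (-\<omega>)))) has_integral 2 * pi) {-pi..pi}"
    by (simp add: o_def)
  moreover have "((\<lambda>\<omega>. 1) has_integral 2 * pi) {-pi..pi}"
    using has_integral_const_real[of "1::real" "-pi" pi] by simp
  ultimately have sum: "((\<lambda>\<omega>. (cmod (noise_filter a b (cis (-\<omega>)) - 1))\<^sup>2
        + 2 * Re (noise_filter a b (cis (-\<omega>))) - 1)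
      has_integral noise_excess a b + 2 * (2 * pi) - 2 * pi) {-pi..pi}"
    by (intro has_integral_diff has_integral_add has_integral_noise_excess assms has_integral_mult_right)
  have "(cmod (z - 1))\<^sup>2 + 2 * Re z - 1 = (cmod z)\<^sup>2" for z
    unfolding cmod_power2 by (simp add: power2_eq_square algebra_simps)
  then have "((\<lambda>\<omega>. (cmod (noise_filter a b (cis (-\<omega>))))\<^sup>2)
      has_integral noise_excess a b + 2 * (2 * pi) - 2 * pi) {-pi..pi}"
    by (intro has_integral_eq[OF _ sum])
  moreover have "noise_excess a b + 2 * (2 * pi) - 2 * pi = noise_excess a b + 2 * pi"
    by simp
  ultimately show ?thesis
    by (simp only:)
qed

lemma arx_cost_decomposition:
  assumes "arx_adm a b"
  shows "arx_cost L Gam F C D nK dK Phir lam a b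
    = lam / allpass_gain\<^sup>2 + (ref_energy a b + lam / allpass_gain\<^sup>2 * noise_excess a b) / (2 * pi)"
proof -
  have "((\<lambda>\<omega>. Phir \<omega> * (cmod (ref_filter a b (cis (-\<omega>))))\<^sup>2
        + lam / allpass_gain\<^sup>2 * (cmod (noise_filter a b (cis (-\<omega>))))\<^sup>2)
      has_integral ref_energy a b + lam / allpass_gain\<^sup>2 * (noise_excess a b + 2 * pi)) {-pi..pi}"
    by (intro has_integral_add has_integral_ref_energy has_integral_mult_right has_integral_noise_filter_sq assms)
  then have "(cost_density a b has_integral ref_energy a b + lam / allpass_gain\<^sup>2 * (noise_excess a b + 2 * pi)) {-pi..pi}"
    by (rule has_integral_spike[OF negligible_poly_roots_on_circle[OF cpoly_nonzero[OF dK0]], rotated])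
       (auto simp: cost_density_eq)
  then have "integral {-pi..pi} (cost_density a b)
      = ref_energy a b + lam / allpass_gain\<^sup>2 * (noise_excess a b + 2 * pi)"
    by (rule integral_unique)
  moreover have "(r + c * (e + 2 * pi)) / (2 * pi) = c + (r + c * e) / (2 * pi)" for r c e :: real
    by (simp add: field_simps)
  ultimately show ?thesis
    by (simp only: arx_cost_eq_integral)
qed

lemma energies_nonneg:
  assumes "arx_adm a b"
  shows "0 \<le> ref_energy a b" "0 \<le> noise_excess a b"
  using has_integral_nonneg[OF has_integral_ref_energy] has_integral_nonneg[OF has_integral_noise_excess]
    assms Phir_pos by (auto simp: less_imp_le)

lemma arx_cost_lower_bound:
  assumes "arx_adm a b"
  shows "lam / allpass_gain\<^sup>2 \<le> arx_cost L Gam F C D nK dK Phir lam a b"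
  using arx_cost_decomposition[OF assms] energies_nonneg[OF assms] lam_pos by simp

definition A_opt :: "complex \<Rightarrow> complex" where
  "A_opt w = poly (cpoly Gam) w * poly (cpoly D) w * poly Fa w / (poly (cpoly C) w * poly Fa_star w)"

definition B_opt :: "complex \<Rightarrow> complex" where
  "B_opt w = poly (cpoly D) w * poly (cpoly L) w / (poly (cpoly C) w * poly Fa_star w * poly Fs w)"

lemma A_opt_B_opt_power_series:
  obtains a b where "arx_adm a b" "\<And>w. norm w \<le> 1 \<Longrightarrow> pseries a w = A_opt w \<and> pseries b w = B_opt w"
proof -
  have "poly (cpoly C * Fa_star * Fs) 0 = 1"
    by (simp add: poly_cpoly_0 C0 poly_roots_poly poly_recip_roots_poly)
  then have "cpoly C * Fa_star * Fs \<noteq> 0"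
    by auto
  moreover have "poly (cpoly C * Fa_star * Fs) w \<noteq> 0" if "norm w \<le> 1" for w
    using nonzero_on_disk[OF that] by simp
  ultimately obtain R where R: "1 < R" "\<And>w. norm w < R \<Longrightarrow> poly (cpoly C * Fa_star * Fs) w \<noteq> 0"
    using poly_nonzero_on_larger_ball by blast
  have self_conj: "self_conjugate (cpoly p)" "self_conjugate Fa" "self_conjugate Fa_star" "self_conjugate Fs" for p
    by (simp_all add: self_conjugate_of_real self_conjugate_roots_poly self_conjugate_recip_roots_poly
        Fa_roots_cnj Fs_roots_cnj)
  have "A_opt holomorphic_on ball 0 R" "B_opt holomorphic_on ball 0 R"
    using R(2) unfolding A_opt_def B_opt_def by (auto intro!: holomorphic_intros)
  moreover have "A_opt (cnj w) = cnj (A_opt w)" "B_opt (cnj w) = cnj (B_opt w)" for w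
    unfolding A_opt_def B_opt_def by (simp_all only: poly_cnj_self_conjugate self_conj complex_cnj_mult complex_cnj_divide)
  ultimately obtain a b where
    a: "summable (\<lambda>k. \<bar>a k\<bar>)" "\<And>w. norm w \<le> 1 \<Longrightarrow> pseries a w = A_opt w" and
    b: "summable (\<lambda>k. \<bar>b k\<bar>)" "\<And>w. norm w \<le> 1 \<Longrightarrow> pseries b w = B_opt w"
    using holomorphic_real_power_series[OF _ R(1)] by metis
  have "complex_of_real (a 0) = 1" "complex_of_real (b 0) = 0"
    using a(2)[of 0] b(2)[of 0]
    by (simp_all add: A_opt_def B_opt_def poly_cpoly_0 Gam0 C0 D0 L0 poly_roots_poly poly_recip_roots_poly)
  then have "arx_adm a b"
    using a(1) b(1) by (simp add: arx_adm_def)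
  with a(2) b(2) show thesis
    using that by blast
qed

lemma filters_of_A_opt_B_opt:
  assumes "norm w \<le> 1" "pseries a w = A_opt w" "pseries b w = B_opt w"
  shows "ref_filter a b w = 0" "noise_filter a b w = 1"
proof -
  note nz = nonzero_on_disk[OF assms(1)]
  have "poly char_poly w = poly (cpoly Gam) w * (poly Fa w * poly Fs w) * poly (cpoly dK) w
      + poly (cpoly L) w * poly (cpoly nK) w"
    by (simp add: poly_char_poly cpoly_F_factor)
  note identities = optimal_transfer_identities[OF nz(1,5,6,2,4) this]
  show "ref_filter a b w = 0"
    using identities(1) by (simp add: ref_filter_def assms(2,3) A_opt_def B_opt_def cpoly_F_factor)
  show "noise_filter a b w = 1"
    using identities(2) by (simp add: noise_filter_def assms(2,3) A_opt_def B_opt_def)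
qed

lemma optimal_cost_attained:
  obtains a b where "arx_adm a b" "arx_cost L Gam F C D nK dK Phir lam a b = lam / allpass_gain\<^sup>2"
proof -
  obtain a b where adm: "arx_adm a b"
    and ab: "\<And>w. norm w \<le> 1 \<Longrightarrow> pseries a w = A_opt w \<and> pseries b w = B_opt w"
    using A_opt_B_opt_power_series by blast
  have "ref_energy a b = 0" "noise_excess a b = 0"
    using filters_of_A_opt_B_opt ab by (simp_all add: ref_energy_def noise_excess_def)
  then show thesis
    using that[OF adm] arx_cost_decomposition[OF adm] by simp
qed

lemma energies_vanish_at_optimum:
  assumes "arx_adm a b" "arx_cost L Gam F C D nK dK Phir lam a b \<le> lam / allpass_gain\<^sup>2"
  shows "ref_energy a b = 0" "noise_excess a b = 0"
proof -
  have c: "0 < lam / allpass_gain\<^sup>2"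
    using lam_pos allpass_gain_pos by simp
  have nonneg: "0 \<le> ref_energy a b" "0 \<le> lam / allpass_gain\<^sup>2 * noise_excess a b"
    using energies_nonneg[OF assms(1)] less_imp_le[OF c] by (metis mult_nonneg_nonneg)+
  moreover have "ref_energy a b + lam / allpass_gain\<^sup>2 * noise_excess a b \<le> 0"
    using assms arx_cost_decomposition[OF assms(1)] pi_gt_zero by (auto simp: divide_le_0_iff)
  ultimately show "ref_energy a b = 0"
    by linarith
  have "lam / allpass_gain\<^sup>2 * noise_excess a b = 0"
    using nonneg \<open>ref_energy a b + _ \<le> 0\<close> by linarith
  with c show "noise_excess a b = 0"
    by (metis less_irrefl mult_eq_0_iff)
qed

lemma filters_at_optimum_on_circle:
  assumes adm: "arx_adm a b" and opt: "arx_cost L Gam F C D nK dK Phir lam a b \<le> lam / allpass_gain\<^sup>2"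
    and w: "norm w = 1"
  shows "ref_filter a b w = 0" "noise_filter a b w = 1"
proof -
  define \<omega> where "\<omega> = - Arg w"
  have "w \<noteq> 0"
    using w by auto
  then have w_eq: "w = cis (-\<omega>)"
    using w by (simp add: \<omega>_def cis_Arg sgn_eq)
  have \<omega>: "\<omega> \<in> {-pi..pi}"
    using Arg_bounded[of w] by (simp add: \<omega>_def)
  have "(cmod (ref_filter a b (cis (-\<omega>))))\<^sup>2 = 0"
    using has_integral_ref_energy[OF adm] energies_vanish_at_optimum[OF adm opt] Phir_pos \<omega>
    by (intro has_integral_0_weighted_imp_0[where g = Phir and a = "-pi" and b = pi])
       (auto intro!: continuous_intros continuous_on_compose_cis_minus continuous_on_ref_filter adm)
  then show "ref_filter a b w = 0"
    by (simp add: w_eq)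
  have "(cmod (noise_filter a b (cis (-\<omega>)) - 1))\<^sup>2 = 0"
    using has_integral_noise_excess[OF adm] energies_vanish_at_optimum[OF adm opt] \<omega>
    by (intro has_integral_0_weighted_imp_0[where g = "\<lambda>_. 1" and a = "-pi" and b = pi])
       (auto intro!: continuous_intros continuous_on_compose_cis_minus continuous_on_noise_filter adm)
  then show "noise_filter a b w = 1"
    by (simp add: w_eq)
qed

lemma optimum_eq_A_opt:
  assumes adm: "arx_adm a b" and opt: "arx_cost L Gam F C D nK dK Phir lam a b \<le> lam / allpass_gain\<^sup>2"
    and w: "norm w \<le> 1"
  shows "pseries a w = A_opt w"
proof -
  \<comment> \<open>dK \<Phi> is a combination of the two filter defects, which vanish on the circle.\<close>
  define \<Phi> where "\<Phi> z = pseries a z * poly (cpoly C) z * poly Fa_star z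
      - poly (cpoly Gam) z * poly (cpoly D) z * poly Fa z" for z
  have sa: "summable (\<lambda>k. \<bar>a k\<bar>)"
    using adm by (simp add: arx_adm_def)
  have cont: "continuous_on (cball 0 1) \<Phi>"
    unfolding \<Phi>_def using sa by (auto intro!: continuous_intros continuous_on_pseries)
  have "poly (cpoly dK) z * \<Phi> z = 0" if "z \<in> cball 0 1" for z
  proof (rule holomorphic_vanishing_on_sphere[OF _ _ _ that])
    show "continuous_on (cball 0 1) (\<lambda>z. poly (cpoly dK) z * \<Phi> z)"
      using cont by (auto intro!: continuous_intros)
    show "(\<lambda>z. poly (cpoly dK) z * \<Phi> z) holomorphic_on ball 0 1"
      unfolding \<Phi>_def using sa by (auto intro!: holomorphic_intros holomorphic_on_pseries)
    fix z :: complex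
    assume "z \<in> sphere 0 1"
    then have z: "norm z = 1"
      by simp
    have F: "poly (cpoly F) z = poly Fa z * poly Fs z"
      by (simp add: cpoly_F_factor)
    have "poly (cpoly dK) z * \<Phi> z
        = poly (cpoly Gam) z * poly (cpoly D) z * poly Fa z * poly (cpoly dK) z * (noise_filter a b z - 1)
          + poly (cpoly nK) z * poly (cpoly C) z * poly Fa_star z * ref_filter a b z"
      unfolding \<Phi>_def noise_filter_def ref_filter_def
      by (rule closed_loop_defect[OF poly_char_poly F nonzero_on_disk(2,4)]) (use z in auto)
    then show "poly (cpoly dK) z * \<Phi> z = 0"
      using filters_at_optimum_on_circle[OF adm opt z] by simp
  qed
  then have "\<Phi> w = 0"
    using continuous_on_cball_vanishing_off_finite[OF cont, of "{z. poly (cpoly dK) z = 0}"]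
      poly_roots_finite[OF cpoly_nonzero[OF dK0]] w by auto
  then show ?thesis
    using nonzero_on_disk[OF w] by (simp add: \<Phi>_def A_opt_def field_simps)
qed

lemma zorder_A_opt_inverse:
  assumes "\<And>q. 1 < norm q \<Longrightarrow> f q = A_opt (inverse q)" "1 < norm p"
  shows "zorder f p = count Fa_roots (inverse p)"
proof (rule zorder_roots_poly_inverse)
  let ?h = "\<lambda>q. poly (cpoly Gam) (inverse q) * poly (cpoly D) (inverse q)
    / (poly (cpoly C) (inverse q) * poly Fa_star (inverse q))"
  have disk: "norm (inverse q) \<le> 1" if "q \<in> {q. 1 < norm q}" for q :: complex
    using that by (simp add: norm_inverse inverse_le_1_iff)
  show "open {q::complex. 1 < norm q}"
    by (intro open_Collect_less) (auto intro: continuous_intros)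
  show "?h holomorphic_on {q. 1 < norm q}"
    using nonzero_on_disk[OF disk] by (auto intro!: holomorphic_intros)
  show "?h p \<noteq> 0"
    using nonzero_on_disk[OF disk] assms(2) by simp
  show "f q = poly Fa (inverse q) * ?h q" if "q \<in> {q. 1 < norm q}" for q
    using assms(1) that by (simp add: A_opt_def)
qed (use assms(2) in auto)

lemma tfH_eq_A_opt:
  assumes "1 \<le> norm q" "A_opt (inverse q) \<noteq> 0"
  shows "tfH C Gam D q = 1 / A_opt (inverse q) * (poly Fa (inverse q) / poly Fa_star (inverse q))"
proof -
  have "norm (inverse q) \<le> 1"
    using assms(1) by (simp add: norm_inverse inverse_le_1_iff)
  then show ?thesis
    using nonzero_on_disk assms(2) by (simp add: tfH_def qev_eq_poly A_opt_def field_simps)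
qed

lemma norm_allpass_on_circle:
  assumes "norm w = 1"
  shows "norm (poly Fa_star w / poly Fa w) = allpass_gain"
  using norm_Fa_star_on_circle[OF assms] Fa_nonzero_on_circle[OF assms] by (simp add: norm_divide)

end

theorem corollary1:
  fixes L Gam F C D nK dK :: "real poly"
    and Phir :: "real \<Rightarrow> real" and lam :: real
    and abar bbar :: "nat \<Rightarrow> real"
  assumes L_form: "coeff L 0 = 0" "L \<noteq> 0"
    and monic: "coeff Gam 0 = 1" "coeff F 0 = 1" "coeff C 0 = 1" "coeff D 0 = 1"
    and orders: "degree Gam \<ge> 1" "degree F \<ge> 1" "degree C \<ge> 1" "degree D \<ge> 1"
    and C_stable: "stable_qpoly C" and D_stable: "stable_qpoly D"
    and F_circle: "\<forall>q. cmod q = 1 \<longrightarrow> qev F q \<noteq> 0"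
    and FD_coprime: "coprime F D"
    and H_stable: "tf_stable C (Gam * D)" and H_inv_stable: "tf_stable (Gam * D) C"
    and K_stab: "stabilizing L Gam F nK dK"
    and lam_pos: "lam > 0"
    and Phir_pos: "\<forall>\<omega>. Phir \<omega> > 0" and Phir_int: "Phir integrable_on {-pi..pi}"
    and adm: "arx_adm abar bbar"
    and minim: "\<forall>a b. arx_adm a b \<longrightarrow>
         arx_cost L Gam F C D nK dK Phir lam abar bbar \<le> arx_cost L Gam F C D nK dK Phir lam a b"
  shows "\<exists>ps :: complex list.
           (\<forall>p \<in> set ps. cmod p > 1) \<and>
           (\<forall>p. cmod p > 1 \<longrightarrow> int (count_list ps p) = zorder (Aev abar) p) \<and>
           (\<forall>q. cmod q \<ge> 1 \<longrightarrow> Aev abar q \<noteq> 0 \<longrightarrow>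
              tfH C Gam D q = (1 / Aev abar q) *
                 ((\<Prod>p\<leftarrow>ps. 1 - p / q) / (\<Prod>p\<leftarrow>ps. 1 - 1 / (p * q)))) \<and>
           (\<forall>\<omega>. lam = arx_cost L Gam F C D nK dK Phir lam abar bbar *
                 (cmod ((\<Prod>p\<leftarrow>ps. 1 - 1 / (p * cis \<omega>)) / (\<Prod>p\<leftarrow>ps. 1 - p / cis \<omega>)))\<^sup>2)"
proof -
  interpret closed_loop_arx L Gam F C D nK dK Phir lam
    using L_form monic C_stable D_stable F_circle H_stable K_stab lam_pos Phir_pos Phir_int
    by unfold_locales auto
  obtain a b where "arx_adm a b" "arx_cost L Gam F C D nK dK Phir lam a b = lam / allpass_gain\<^sup>2"
    by (rule optimal_cost_attained)
  then have opt: "arx_cost L Gam F C D nK dK Phir lam abar bbar = lam / allpass_gain\<^sup>2"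
    using minim arx_cost_lower_bound[OF adm] by (metis order_antisym)
  have A: "Aev abar q = A_opt (inverse q)" if "1 \<le> norm q" for q
    using optimum_eq_A_opt[OF adm] opt that by (simp add: Aev_eq_pseries norm_inverse inverse_le_1_iff)
  obtain xs where xs: "mset xs = Fa_roots"
    using ex_mset by blast
  show ?thesis
  proof (intro exI[of _ "map inverse xs"] conjI allI impI ballI)
    fix p
    assume "p \<in> set (map inverse xs)"
    then show "1 < cmod p"
      using Fa_roots_in_disc xs by (auto simp: norm_inverse one_less_inverse_iff simp flip: set_mset_mset)
  next
    fix p :: complex
    assume "1 < cmod p"
    then show "int (count_list (map inverse xs) p) = zorder (Aev abar) p"
      using zorder_A_opt_inverse[of "Aev abar" p] A xs
      by (simp add: count_mset[symmetric] count_image_mset_involution)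
  next
    fix q :: complex
    assume "1 \<le> cmod q" "Aev abar q \<noteq> 0"
    then show "tfH C Gam D q = 1 / Aev abar q * ((\<Prod>p\<leftarrow>map inverse xs. 1 - p / q)
        / (\<Prod>p\<leftarrow>map inverse xs. 1 - 1 / (p * q)))"
      unfolding prod_list_map_inverse_roots_poly prod_list_map_inverse_recip_roots_poly xs
      using tfH_eq_A_opt A by simp
  next
    fix \<omega>
    show "lam = arx_cost L Gam F C D nK dK Phir lam abar bbar
        * (cmod ((\<Prod>p\<leftarrow>map inverse xs. 1 - 1 / (p * cis \<omega>)) / (\<Prod>p\<leftarrow>map inverse xs. 1 - p / cis \<omega>)))\<^sup>2"
      unfolding prod_list_map_inverse_roots_poly prod_list_map_inverse_recip_roots_poly xs
      using norm_allpass_on_circle[of "cis (-\<omega>)"] opt allpass_gain_pos by (simp add: cis_inverse)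
  qed
qed

end
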